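(* Let $c\in(0,1)$ and let $\sigma>0$ satisfy $C_{\mathrm{BS}}(\sigma)=c$. Let $g(y)=\log C_{\mathrm{BS}}(y)-\log c$ for $y>0$. The Newton–Raphson iteration $\sigma_{n+1}=\sigma_n-g(\sigma_n)/g'(\sigma_n)$ for the equation $g(y)=0$ can be written as $\sigma_{n+1}=N(\sigma_n)$ with $$N(y)=y+\left[\frac{d_1(y)^2}{2}-\log C_{\mathcal V}(y)+\log\!\big(c\sqrt{2\pi}\big)\right]C_{\mathcal V}(y).$$ Moreover, if $0<\sigma_0\le\sigma$, then the iterates satisfy $\sigma_0\le\sigma_1\le\sigma_2\le\cdots\le\sigma$ and $\sigma_n\to\sigma$ as $n\to\infty$.
   Context: Fix $k\ge 0$. Let $\Phi$ and $\phi$ denote the standard normal distribution function and density. For $\sigma>0$ put $d_1(\sigma)=-k/\sigma+\sigma/2$, $d_2(\sigma)=-k/\sigma-\sigma/2$, and $C_{\mathrm{BS}}(\sigma)=\Phi(d_1(\sigma))-e^k\,\Phi(d_2(\sigma))$, a strictly increasing bijection from $(0,\infty)$ onto $(0,1)$; for $c\in(0,1)$ the implied volatility is the unique $\sigma>0$ with $C_{\mathrm{BS}}(\sigma)=c$. The price-to-vega ratio is $C_{\mathcal V}(y)=C_{\mathrm{BS}}(y)/\phi(d_1(y))$. *)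

theory Defs
  imports "HOL-Probability.Probability"
begin

definition npdf :: "real \<Rightarrow> real" where
  "npdf x = exp (- x\<^sup>2 / 2) / sqrt (2 * pi)"

definition ncdf :: "real \<Rightarrow> real" where
  "ncdf x = (LBINT t:{..x}. npdf t)"

definition d1 :: "real \<Rightarrow> real \<Rightarrow> real" where
  "d1 k s = - k / s + s / 2"

definition d2 :: "real \<Rightarrow> real \<Rightarrow> real" where
  "d2 k s = - k / s - s / 2"

definition C_BS :: "real \<Rightarrow> real \<Rightarrow> real" where
  "C_BS k s = ncdf (d1 k s) - exp k * ncdf (d2 k s)"

definition C_V :: "real \<Rightarrow> real \<Rightarrow> real" where
  "C_V k y = C_BS k y / npdf (d1 k y)"

definition newton_map :: "real \<Rightarrow> real \<Rightarrow> real \<Rightarrow> real" where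
  "newton_map k c y = y + ((d1 k y)\<^sup>2 / 2 - ln (C_V k y) + ln (c * sqrt (2 * pi))) * C_V k y"

end

theory Submission imports Defs "HOL-Real_Asymp.Real_Asymp" begin

text \<open>
  With \<open>g = ln C_BS - ln c\<close> one has \<open>g' = 1 / C_V\<close>, so a Newton step is
  \<open>y + (ln c - ln C_BS y) C_V y\<close>, which is \<open>newton_map\<close> once \<open>ln C_V\<close> is expanded.
  Writing the Mills ratio \<open>R = \<Phi> / \<phi>\<close>, the identity \<open>e\<^sup>k \<phi>(d\<^sub>2) = \<phi>(d\<^sub>1)\<close> gives
  \<open>C_V = R(d\<^sub>1) - R(d\<^sub>2)\<close>; with \<open>R' = 1 + t R\<close> and the Gordon-type bound
  \<open>1 + t R(t) < 1 / (1 + t\<^sup>2)\<close> for \<open>t < 0\<close> this shows that \<open>C_V\<close> is nondecreasing when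
  \<open>k \<ge> 0\<close>, i.e. \<open>g\<close> is increasing and concave. Newton's method for such a function,
  started left of the root, moves right without overshooting; the iterates thus
  increase to a fixed point of \<open>newton_map\<close>, which can only be the root \<open>\<sigma>\<close>.
\<close>

lemma iterates_tendsto_unique_fixpoint:
  fixes N :: "real \<Rightarrow> real" and a b x :: real
  assumes x: "a < x" "x \<le> b"
    and step: "\<And>y. a < y \<Longrightarrow> y \<le> b \<Longrightarrow> y \<le> N y \<and> N y \<le> b"
    and cont: "\<And>y. a < y \<Longrightarrow> y \<le> b \<Longrightarrow> isCont N y"
    and fixpoint: "\<And>y. a < y \<Longrightarrow> y \<le> b \<Longrightarrow> N y = y \<Longrightarrow> y = b"
  shows "incseq (\<lambda>n. (N ^^ n) x) \<and> (\<forall>n. (N ^^ n) x \<le> b) \<and> (\<lambda>n. (N ^^ n) x) \<longlonglongrightarrow> b"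
proof -
  define s where "s n = (N ^^ n) x" for n
  have s_Suc: "s (Suc n) = N (s n)" for n
    by (simp add: s_def)
  have bounds: "a < s n \<and> s n \<le> b" for n
  proof (induction n)
    case 0
    then show ?case using x by (simp add: s_def)
  next
    case (Suc n)
    then show ?case using step[of "s n"] by (auto simp: s_Suc)
  qed
  have inc: "incseq s"
    using step bounds by (intro incseq_SucI) (simp add: s_Suc)
  obtain L where L: "s \<longlonglongrightarrow> L" "\<And>n. s n \<le> L"
    using incseq_convergent[OF inc, of b] bounds by blast
  have "a < L"
    using bounds[of 0] L(2)[of 0] by linarith
  moreover have "L \<le> b"
    using L(1) bounds by (intro LIMSEQ_le_const2) auto
  ultimately have L_range: "a < L" "L \<le> b" .
  have "(\<lambda>n. s (Suc n)) \<longlonglongrightarrow> N L"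
    unfolding s_Suc by (rule isCont_tendsto_compose[OF cont[OF L_range] L(1)])
  then have "N L = L"
    using LIMSEQ_Suc[OF L(1)] by (rule LIMSEQ_unique)
  then have "L = b"
    using fixpoint L_range by blast
  then show ?thesis
    using inc bounds L(1) by (simp add: s_def[abs_def])
qed

lemma newton_step_concave_below_root:
  fixes f f' :: "real \<Rightarrow> real" and y r :: real
  assumes "y \<le> r" "f r = 0"
    and deriv: "\<And>t. y \<le> t \<Longrightarrow> t \<le> r \<Longrightarrow> (f has_real_derivative f' t) (at t)"
    and pos: "\<And>t. y \<le> t \<Longrightarrow> t \<le> r \<Longrightarrow> 0 < f' t"
    and antimono: "\<And>t. y \<le> t \<Longrightarrow> t \<le> r \<Longrightarrow> f' t \<le> f' y"
  shows "y \<le> y - f y / f' y" "y - f y / f' y \<le> r"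
proof -
  have f'y: "0 < f' y"
    using pos assms(1) by simp
  have "f y \<le> f r"
    by (rule DERIV_nonneg_imp_nondecreasing[OF assms(1)])
       (use deriv pos less_imp_le in blast)
  then show "y \<le> y - f y / f' y"
    using f'y assms(2) by (simp add: divide_nonpos_pos)
  define P where "P t = f t - t * f' y" for t
  have "P r \<le> P y"
  proof (rule DERIV_nonpos_imp_nonincreasing[OF assms(1)])
    fix t assume t: "y \<le> t" "t \<le> r"
    have "(P has_real_derivative f' t - f' y) (at t)"
      unfolding P_def[abs_def] using deriv[OF t]
      by (auto intro!: derivative_eq_intros)
    then show "\<exists>d. DERIV P t :> d \<and> d \<le> 0"
      using antimono[OF t] by auto
  qed
  then have "(y - r) * f' y \<le> f y"
    using assms(2) by (simp add: P_def algebra_simps)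
  then have "y - r \<le> f y / f' y"
    by (simp add: pos_le_divide_eq[OF f'y])
  then show "y - f y / f' y \<le> r"
    by simp
qed

lemma npdf_eq_std_normal_density: "npdf = std_normal_density"
  by (rule ext) (simp add: npdf_def normal_density_def)

lemma npdf_pos: "npdf x > 0"
  by (simp add: npdf_def)

lemma npdf_has_real_derivative: "(npdf has_real_derivative (- x * npdf x)) (at x)"
  unfolding npdf_def
  by (auto intro!: derivative_eq_intros simp: power2_eq_square field_simps)

lemma continuous_on_npdf: "continuous_on S npdf"
  unfolding npdf_def by (intro continuous_intros) auto

lemma set_integrable_npdf: "A \<in> sets borel \<Longrightarrow> set_integrable lborel A npdf"
  unfolding set_integrable_def npdf_eq_std_normal_density
  by (intro integrable_mult_indicator) auto

lemma ncdf_split: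
  assumes "a \<le> x"
  shows "ncdf x = (LBINT t:{..<a}. npdf t) + integral {a..x} npdf"
proof -
  have "{..x} = {..<a} \<union> {a..x}"
    using assms by auto
  then have "ncdf x = (LBINT t:{..<a}. npdf t) + (LBINT t:{a..x}. npdf t)"
    unfolding ncdf_def
    by (simp only:) (rule set_integral_Un, auto simp: set_integrable_npdf)
  also have "(LBINT t:{a..x}. npdf t) = integral {a..x} npdf"
    by (rule set_borel_integral_eq_integral(2)) (simp add: set_integrable_npdf)
  finally show ?thesis .
qed

lemma ncdf_has_real_derivative: "(ncdf has_real_derivative npdf x) (at x)"
proof -
  define F where "F u = (LBINT t:{..<x-1}. npdf t) + integral {x-1..u} npdf" for u
  have "(F has_real_derivative npdf x) (at x within {x-1..x+1})"
    unfolding F_def[abs_def]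
    by (auto intro!: derivative_eq_intros integral_has_real_derivative continuous_on_npdf)
  then have "(F has_real_derivative npdf x) (at x within {x-1<..<x+1})"
    by (rule DERIV_subset) auto
  then have "(F has_real_derivative npdf x) (at x)"
    by (subst (asm) at_within_open) auto
  then show ?thesis
    by (rule has_field_derivative_transform_within_open[where S="{x-1<..<x+1}"])
       (auto simp: F_def ncdf_split[of "x-1"])
qed

lemma ncdf_has_real_derivative_chain[derivative_intros]:
  "(f has_real_derivative f') (at x within S) \<Longrightarrow>
   ((\<lambda>x. ncdf (f x)) has_real_derivative npdf (f x) * f') (at x within S)"
  using DERIV_chain2[OF ncdf_has_real_derivative] by blast

lemma npdf_has_real_derivative_chain[derivative_intros]:
  "(f has_real_derivative f') (at x within S) \<Longrightarrow>
   ((\<lambda>x. npdf (f x)) has_real_derivative (- f x * npdf (f x)) * f') (at x within S)"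
  using DERIV_chain2[OF npdf_has_real_derivative] by blast

lemma ncdf_nonneg: "ncdf x \<ge> 0"
  unfolding ncdf_def set_lebesgue_integral_def
  by (intro integral_nonneg_AE) (auto simp: npdf_pos less_imp_le)

lemma ncdf_tendsto_at_bot: "(ncdf \<longlongrightarrow> 0) at_bot"
proof -
  have lim: "((\<lambda>a. LBINT t:{a..0}. npdf t) \<longlongrightarrow> ncdf 0) at_bot"
    unfolding ncdf_def
    by (rule tendsto_set_lebesgue_integral_at_bot) (auto simp: set_integrable_npdf)
  have "ncdf a = ncdf 0 - (LBINT t:{a..0}. npdf t)" if "a \<le> 0" for a
  proof -
    have "(LBINT t:{a..0}. npdf t) = integral {a..0} npdf"
      by (rule set_borel_integral_eq_integral(2)) (simp add: set_integrable_npdf)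
    moreover have "integral {a..a} npdf = 0"
      by simp
    ultimately show ?thesis
      using ncdf_split[OF that] ncdf_split[of a a] by linarith
  qed
  then have "\<forall>\<^sub>F a in at_bot. ncdf 0 - (LBINT t:{a..0}. npdf t) = ncdf a"
    unfolding eventually_at_bot_linorder by (intro exI[of _ 0] allI impI) (rule sym, blast)
  moreover have "((\<lambda>a. ncdf 0 - (LBINT t:{a..0}. npdf t)) \<longlongrightarrow> ncdf 0 - ncdf 0) at_bot"
    by (intro tendsto_intros lim)
  ultimately show ?thesis
    using Lim_transform_eventually by force
qed

subsection \<open>The Mills ratio\<close>

lemma ncdf_less_npdf_div_neg:
  assumes "t < 0"
  shows "ncdf t < npdf t / (- t)"
proof -
  define H where "H x = npdf x / (- x) - ncdf x" for x
  have "(H \<longlongrightarrow> 0 - 0) at_bot"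
    unfolding H_def
  proof (intro tendsto_intros ncdf_tendsto_at_bot)
    show "((\<lambda>x. npdf x / - x) \<longlongrightarrow> 0) at_bot"
      unfolding npdf_def by real_asymp
  qed
  moreover have "\<exists>d. (H has_real_derivative d) (at x) \<and> 0 < d" if "x \<le> t" for x
  proof -
    have "(H has_real_derivative npdf x / x\<^sup>2) (at x)"
      unfolding H_def using that assms
      by (auto intro!: derivative_eq_intros simp: power2_eq_square field_simps)
    then show ?thesis
      using that assms by (intro exI[of _ "npdf x / x\<^sup>2"]) (simp add: npdf_pos)
  qed
  ultimately have "0 < H t"
    by (intro DERIV_pos_imp_increasing_at_bot[where flim = 0]) auto
  then show ?thesis
    by (simp add: H_def)
qed

lemma ncdf_gt_gordon_bound: "- t * npdf t / (1 + t\<^sup>2) < ncdf t"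
proof -
  define G where "G x = ncdf x + x * npdf x / (1 + x\<^sup>2)" for x
  have "(G \<longlongrightarrow> 0 + 0) at_bot"
    unfolding G_def
  proof (intro tendsto_intros ncdf_tendsto_at_bot)
    show "((\<lambda>x. x * npdf x / (1 + x\<^sup>2)) \<longlongrightarrow> 0) at_bot"
      unfolding npdf_def by real_asymp
  qed
  moreover have "\<exists>d. (G has_real_derivative d) (at x) \<and> 0 < d" for x
  proof -
    have pos: "1 + x\<^sup>2 > 0"
      by (simp add: add_pos_nonneg)
    have "(G has_real_derivative 2 * npdf x / (1 + x\<^sup>2)\<^sup>2) (at x)"
      unfolding G_def[abs_def] using pos
      by (auto intro!: derivative_eq_intros,
          simp add: divide_simps, simp add: algebra_simps power2_eq_square)
    then show ?thesis
      using pos by (intro exI[of _ "2 * npdf x / (1 + x\<^sup>2)\<^sup>2"]) (simp add: npdf_pos)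
  qed
  ultimately have "0 < G t"
    by (intro DERIV_pos_imp_increasing_at_bot[where flim = 0]) auto
  then show ?thesis
    by (simp add: G_def)
qed

definition mills_ratio :: "real \<Rightarrow> real" where
  "mills_ratio t = ncdf t / npdf t"

lemma ncdf_eq_npdf_mult_mills_ratio: "ncdf t = npdf t * mills_ratio t"
  using npdf_pos[of t] by (simp add: mills_ratio_def)

lemma mills_ratio_has_real_derivative:
  "(mills_ratio has_real_derivative 1 + t * mills_ratio t) (at t)"
  unfolding mills_ratio_def[abs_def] using npdf_pos[of t]
  by (auto intro!: derivative_eq_intros ncdf_has_real_derivative npdf_has_real_derivative
           simp: mills_ratio_def field_simps power2_eq_square)

lemma mills_ratio_deriv_pos: "0 < 1 + t * mills_ratio t"
proof (cases "t < 0")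
  case True
  then have "mills_ratio t < 1 / (- t)"
    using ncdf_less_npdf_div_neg[OF True] npdf_pos[of t] by (simp add: mills_ratio_def field_simps)
  with True show ?thesis
    by (simp add: field_simps)
next
  case False
  have "0 \<le> mills_ratio t"
    using ncdf_nonneg[of t] npdf_pos[of t] by (simp add: mills_ratio_def)
  with False show ?thesis
    by (simp add: add_pos_nonneg)
qed

lemma mills_ratio_deriv_less:
  assumes "t < 0"
  shows "1 + t * mills_ratio t < 1 / (1 + t\<^sup>2)"
proof -
  have pos: "1 + t\<^sup>2 > 0"
    by (simp add: add_pos_nonneg)
  have "- t / (1 + t\<^sup>2) < mills_ratio t"
    using ncdf_gt_gordon_bound[of t] npdf_pos[of t] pos
    by (simp add: mills_ratio_def field_simps)
  then have "t * mills_ratio t < t * (- t / (1 + t\<^sup>2))"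
    by (rule mult_strict_left_mono_neg[OF _ assms])
  also have "\<dots> = 1 / (1 + t\<^sup>2) - 1"
    using pos by (simp add: field_simps power2_eq_square)
  finally show ?thesis
    by simp
qed

lemma strict_mono_mills_ratio: "strict_mono mills_ratio"
  by (intro strict_monoI DERIV_pos_imp_increasing[where f = mills_ratio])
     (use mills_ratio_has_real_derivative mills_ratio_deriv_pos in blast)+

text \<open>
  Integrate \<open>mills_ratio_deriv_less\<close>: the right-hand side is the increment of
  \<open>s \<mapsto> s / (1 + a (a + s))\<close>, whose derivative \<open>(1 + a\<^sup>2) / (1 + a (a + s))\<^sup>2\<close>
  dominates \<open>1 / (1 + (a + s)\<^sup>2)\<close> by Cauchy--Schwarz.
\<close>
lemma mills_ratio_diff_less:
  assumes a: "a > 0" and y: "y > 0"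
  shows "mills_ratio (- a) - mills_ratio (- a - y) < y / (1 + a * (a + y))"
proof -
  define F where "F s = mills_ratio (- a) - mills_ratio (- a - s) - s / (1 + a * (a + s))" for s
  have "F y < F 0"
  proof (rule DERIV_neg_imp_decreasing[OF y])
    fix s assume s: "0 \<le> s" "s \<le> y"
    define D where "D = 1 + (- a - s) * mills_ratio (- a - s) - (1 + a\<^sup>2) / (1 + a * (a + s))\<^sup>2"
    have den: "1 + a * (a + s) > 0"
      using a s by (simp add: add_pos_nonneg)
    have "(F has_real_derivative D) (at s)"
      unfolding F_def[abs_def] D_def using den
      by (auto intro!: derivative_eq_intros DERIV_chain2[OF mills_ratio_has_real_derivative],
          simp add: divide_simps, simp add: algebra_simps power2_eq_square)
    moreover have "D < 0"
    proof -
      have "(1 + a * (a + s))\<^sup>2 \<le> (1 + a\<^sup>2) * (1 + (- a - s)\<^sup>2)"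
        using zero_le_power2[of s] by (simp add: power2_eq_square algebra_simps)
      then have "1 / (1 + (- a - s)\<^sup>2) \<le> (1 + a\<^sup>2) / (1 + a * (a + s))\<^sup>2"
        using den by (simp add: divide_simps add_pos_nonneg mult.commute)
      then show ?thesis
        using mills_ratio_deriv_less[of "- a - s"] a s by (simp add: D_def)
    qed
    ultimately show "\<exists>d. DERIV F s :> d \<and> d < 0"
      by blast
  qed
  then show ?thesis
    by (simp add: F_def)
qed

subsection \<open>Price, vega and the price-to-vega ratio\<close>

lemma d2_eq_d1_minus: "d2 k y = d1 k y - y"
  by (simp add: d1_def d2_def)

lemma d1_has_real_derivative:
  "y \<noteq> 0 \<Longrightarrow> (d1 k has_real_derivative k / y\<^sup>2 + 1 / 2) (at y)"
  unfolding d1_def[abs_def]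
  by (auto intro!: derivative_eq_intros simp: power2_eq_square field_simps)

lemma exp_mult_npdf_d2:
  assumes "y \<noteq> 0"
  shows "exp k * npdf (d2 k y) = npdf (d1 k y)"
proof -
  have "k - (d2 k y)\<^sup>2 / 2 = - (d1 k y)\<^sup>2 / 2"
    using assms by (simp add: d1_def d2_def power2_eq_square field_simps)
  then show ?thesis
    unfolding npdf_def by (metis exp_add times_divide_eq_right diff_conv_add_uminus minus_divide_left)
qed

lemma C_BS_eq_npdf_mult_C_V: "C_BS k y = npdf (d1 k y) * C_V k y"
  using npdf_pos[of "d1 k y"] by (simp add: C_V_def)

lemma C_V_eq_mills_ratio_diff:
  assumes "y \<noteq> 0"
  shows "C_V k y = mills_ratio (d1 k y) - mills_ratio (d2 k y)"
proof -
  have "C_BS k y = npdf (d1 k y) * (mills_ratio (d1 k y) - mills_ratio (d2 k y))"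
    using exp_mult_npdf_d2[OF assms, of k]
    by (simp add: C_BS_def ncdf_eq_npdf_mult_mills_ratio algebra_simps)
  then show ?thesis
    using npdf_pos[of "d1 k y"] by (simp add: C_V_def)
qed

lemma C_V_pos: "y > 0 \<Longrightarrow> C_V k y > 0"
  using strict_monoD[OF strict_mono_mills_ratio, of "d2 k y" "d1 k y"]
  by (simp add: C_V_eq_mills_ratio_diff d2_eq_d1_minus)

lemma C_BS_pos: "y > 0 \<Longrightarrow> C_BS k y > 0"
  using C_V_pos[of y k] npdf_pos[of "d1 k y"] by (simp add: C_BS_eq_npdf_mult_C_V)

lemma C_BS_has_real_derivative:
  assumes "y > 0"
  shows "(C_BS k has_real_derivative npdf (d1 k y)) (at y)"
  unfolding C_BS_def[abs_def] d2_eq_d1_minus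
  using assms exp_mult_npdf_d2[of y k]
  by (auto intro!: derivative_eq_intros d1_has_real_derivative
           simp: d2_eq_d1_minus algebra_simps)

lemma C_V_has_real_derivative:
  assumes "y > 0"
  shows "(C_V k has_real_derivative 1 + C_V k y * d1 k y * (k / y\<^sup>2 + 1 / 2)) (at y)"
  unfolding C_V_def[abs_def] using assms npdf_pos[of "d1 k y"]
  by (auto intro!: derivative_eq_intros C_BS_has_real_derivative d1_has_real_derivative
           simp: C_V_def field_simps power2_eq_square)

text \<open>
  Only \<open>d\<^sub>1 < 0\<close> needs work: with \<open>a = - d\<^sub>1\<close> one has \<open>k = y\<^sup>2 / 2 + a y\<close> and
  \<open>d\<^sub>2 = - a - y\<close>, the derivative becomes \<open>1 - C_V a (a + y) / y\<close>, and
  \<open>mills_ratio_diff_less\<close> bounds \<open>C_V\<close> by exactly what is needed.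
\<close>
lemma C_V_deriv_nonneg:
  assumes y: "y > 0" and k: "k \<ge> 0"
  shows "0 \<le> 1 + C_V k y * d1 k y * (k / y\<^sup>2 + 1 / 2)"
proof (cases "d1 k y \<ge> 0")
  case True
  then show ?thesis
    using k C_V_pos[OF y, of k] by simp
next
  case False
  define a where "a = - d1 k y"
  have a: "a > 0" and d1: "d1 k y = - a" and d2: "d2 k y = - a - y"
    using False by (simp_all add: a_def d2_eq_d1_minus)
  have "k = y\<^sup>2 / 2 + a * y"
    using d1 y by (simp add: d1_def field_simps power2_eq_square)
  then have factor: "k / y\<^sup>2 + 1 / 2 = (a + y) / y"
    using y by (simp add: field_simps power2_eq_square)
  have "C_V k y < y / (1 + a * (a + y))"
    using mills_ratio_diff_less[OF a y] y by (simp add: C_V_eq_mills_ratio_diff d1 d2)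
  then have "C_V k y * (a * (a + y) / y) < y / (1 + a * (a + y)) * (a * (a + y) / y)"
    using a y by (intro mult_strict_right_mono) auto
  also have "\<dots> < 1"
    using a y by (simp add: divide_simps add_pos_pos)
  finally show ?thesis
    by (simp add: d1 factor)
qed

lemma mono_on_C_V:
  assumes "k \<ge> 0"
  shows "mono_on {0<..} (C_V k)"
proof (rule mono_onI)
  fix y z :: real assume y: "y \<in> {0<..}" and "z \<in> {0<..}" "y \<le> z"
  then show "C_V k y \<le> C_V k z"
  proof (intro DERIV_nonneg_imp_nondecreasing[where f = "C_V k"])
    fix x assume "y \<le> x"
    with y have "x > 0" by simp
    then show "\<exists>d. (C_V k has_real_derivative d) (at x) \<and> 0 \<le> d"
      using C_V_has_real_derivative C_V_deriv_nonneg assms by blast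
  qed
qed

lemma strict_mono_on_C_BS: "strict_mono_on {0<..} (C_BS k)"
proof (rule strict_mono_onI)
  fix y z :: real assume y: "y \<in> {0<..}" and "z \<in> {0<..}" "y < z"
  then show "C_BS k y < C_BS k z"
  proof (intro DERIV_pos_imp_increasing[where f = "C_BS k"])
    fix x assume "y \<le> x"
    with y have "x > 0" by simp
    then show "\<exists>d. (C_BS k has_real_derivative d) (at x) \<and> 0 < d"
      using C_BS_has_real_derivative npdf_pos by blast
  qed
qed

lemma ln_C_BS_has_real_derivative:
  assumes "y > 0"
  shows "((\<lambda>y. ln (C_BS k y)) has_real_derivative 1 / C_V k y) (at y)"
  using C_BS_pos[OF assms, of k] npdf_pos[of "d1 k y"]
  by (auto intro!: derivative_eq_intros C_BS_has_real_derivative[OF assms] simp: C_V_def)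

lemma newton_map_eq_newton_step:
  assumes "y > 0" "c > 0"
  shows "newton_map k c y = y - (ln (C_BS k y) - ln c) / (1 / C_V k y)"
proof -
  have "ln (C_BS k y) = ln (npdf (d1 k y)) + ln (C_V k y)"
    using npdf_pos[of "d1 k y"] C_V_pos[OF assms(1), of k]
    by (simp add: C_BS_eq_npdf_mult_C_V ln_mult)
  moreover have "ln (npdf (d1 k y)) = - (d1 k y)\<^sup>2 / 2 - ln (sqrt (2 * pi))"
    by (simp add: npdf_def ln_div)
  ultimately have "ln (C_V k y) = ln (C_BS k y) + (d1 k y)\<^sup>2 / 2 + ln (sqrt (2 * pi))"
    by linarith
  moreover have "ln (c * sqrt (2 * pi)) = ln c + ln (sqrt (2 * pi))"
    using assms(2) by (simp add: ln_mult)
  ultimately show ?thesis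
    unfolding newton_map_def by (simp add: algebra_simps)
qed

lemma isCont_newton_map:
  assumes "y > 0"
  shows "isCont (newton_map k c) y"
proof -
  have "isCont (C_V k) y" "isCont (d1 k) y"
    using C_V_has_real_derivative[OF assms] d1_has_real_derivative[of y k] assms
    by (auto intro: DERIV_isCont)
  moreover have "newton_map k c = (\<lambda>y. y + ((d1 k y)\<^sup>2 / 2 - ln (C_V k y)
      + ln (c * sqrt (2 * pi))) * C_V k y)"
    by (simp add: newton_map_def[abs_def])
  ultimately show ?thesis
    using C_V_pos[OF assms, of k] by (auto intro!: continuous_intros)
qed

lemma newton_map_step_bounds:
  assumes k: "k \<ge> 0" and c: "c > 0" and y: "0 < y" "y \<le> \<sigma>" and \<sigma>: "C_BS k \<sigma> = c"
  shows "y \<le> newton_map k c y \<and> newton_map k c y \<le> \<sigma>"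
proof -
  let ?f = "\<lambda>t. ln (C_BS k t) - ln c" and ?f' = "\<lambda>t. 1 / C_V k t"
  have "(?f has_real_derivative ?f' t) (at t)" if "y \<le> t" for t
    using DERIV_diff[OF ln_C_BS_has_real_derivative DERIV_const, of t k "ln c"] that y by simp
  moreover have "0 < ?f' t" if "y \<le> t" for t
    using C_V_pos that y by simp
  moreover have "?f' t \<le> ?f' y" if "y \<le> t" for t
    using mono_onD[OF mono_on_C_V[OF k], of y t] C_V_pos[of y k] that y
    by (simp add: frac_le)
  ultimately show ?thesis
    using newton_step_concave_below_root[of y \<sigma> ?f ?f'] y \<sigma> c
    by (simp add: newton_map_eq_newton_step)
qed

lemma newton_map_fixpoint:
  assumes "y > 0" "c > 0" "newton_map k c y = y"
  shows "C_BS k y = c"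
  using assms C_V_pos[of y k] C_BS_pos[of y k]
  by (simp add: newton_map_eq_newton_step)

theorem proposition6:
  fixes k c \<sigma> :: real and g :: "real \<Rightarrow> real"
  assumes k: "k \<ge> 0"
    and c: "0 < c" "c < 1"
    and sigma: "\<sigma> > 0" "C_BS k \<sigma> = c"
    and g_def: "\<And>y. y > 0 \<Longrightarrow> g y = ln (C_BS k y) - ln c"
  shows "(\<forall>y>0. g differentiable (at y) \<and>
              y - g y / deriv g y = newton_map k c y)
    \<and> (\<forall>\<sigma>0 :: real. 0 < \<sigma>0 \<and> \<sigma>0 \<le> \<sigma> \<longrightarrow>
          (let s = (\<lambda>n. (newton_map k c ^^ n) \<sigma>0) in
             incseq s \<and> (\<forall>n. s n \<le> \<sigma>) \<and> s \<longlonglongrightarrow> \<sigma>))"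
proof (intro conjI allI impI)
  fix y :: real assume y: "y > 0"
  have "((\<lambda>y. ln (C_BS k y) - ln c) has_real_derivative 1 / C_V k y) (at y)"
    using DERIV_diff[OF ln_C_BS_has_real_derivative[OF y, of k] DERIV_const] by simp
  then have "(g has_real_derivative 1 / C_V k y) (at y)"
    by (rule has_field_derivative_transform_within_open[where S = "{0<..}"]) (use y g_def in auto)
  then have "g differentiable (at y)" "deriv g y = 1 / C_V k y"
    by (auto simp: real_differentiable_def intro: DERIV_imp_deriv)
  then show "g differentiable (at y)" "y - g y / deriv g y = newton_map k c y"
    using g_def[OF y] newton_map_eq_newton_step[OF y c(1)] by auto
next
  fix \<sigma>0 :: real assume "0 < \<sigma>0 \<and> \<sigma>0 \<le> \<sigma>"
  moreover have "y = \<sigma>" if "0 < y" "y \<le> \<sigma>" "newton_map k c y = y" for y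
    using newton_map_fixpoint[OF that(1) c(1) that(3)] strict_mono_on_C_BS[of k] that sigma
    by (metis greaterThan_iff order_less_le strict_mono_on_def)
  ultimately show "let s = \<lambda>n. (newton_map k c ^^ n) \<sigma>0 in
      incseq s \<and> (\<forall>n. s n \<le> \<sigma>) \<and> s \<longlonglongrightarrow> \<sigma>"
    unfolding Let_def using newton_map_step_bounds[OF k c(1) _ _ sigma(2)] isCont_newton_map
    by (intro iterates_tendsto_unique_fixpoint[where a = 0]) auto
qed

end
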